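(* Let $q=3^m$ with $m\ge1$ and $f(x)=x^{q+2}$ on $\mathbb{F}_{q^2}$. If $q\ge 9$ then $\nu_2>0$, and if $q\ge 27$ then $\nu_5>0$.
   Context: $\beta_f(a,b)$ is the number of $(x,y)\in\mathbb{F}_{q^2}^2$ with $f(x)-f(y)=b$ and $f(x+a)-f(y+a)=b$. For the power function $f$, $\nu_i=\#\{b\in\mathbb{F}_{q^2}^*:\ \beta_f(1,b)=i\}$. *)

theory Defs
  imports Main
begin

definition beta :: "('a::{field,finite} \<Rightarrow> 'a) \<Rightarrow> 'a \<Rightarrow> 'a \<Rightarrow> nat" where
  "beta f a b = card {(x, y). f x - f y = b \<and> f (x + a) - f (y + a) = b}"

definition nu :: "('a::{field,finite} \<Rightarrow> 'a) \<Rightarrow> nat \<Rightarrow> nat" where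
  "nu f i = card {b. b \<noteq> 0 \<and> beta f 1 b = i}"

end

theory Submission
  imports
    Defs
    "HOL-Algebra.Algebraic_Closure_Type"
    "HOL-Library.Product_Plus"
    "HOL-Number_Theory.Residues"
begin

text \<open>
  Write \<open>q = 3\<^sup>m\<close> and \<open>c x = x\<^sup>q\<close> for the conjugation of \<open>GF(q\<^sup>2)\<close> over \<open>GF(q)\<close>, so that
  \<open>f x = c x * x\<^sup>2\<close>. For \<open>b \<notin> GF(q)\<close>, characteristic three makes the pairs counted by
  \<open>beta f 1 b\<close> exactly the \<open>(1 + u, 1 - u)\<close> with \<open>F u = - b\<close>, where \<open>F u = c u * u\<^sup>2 + c u - u\<close>.
  The solutions of \<open>F u = t\<close> correspond, through the norm \<open>n = u * c u\<close>, to the roots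
  \<open>n \<in> GF(q) - {0, -1}\<close> of a quintic in \<open>n\<close> with coefficients \<open>t + c t\<close> and \<open>t - c t\<close>.
  For a two-parameter family of \<open>t\<close> this quintic has two simple roots in \<open>GF(q)\<close>, and its
  remaining cubic factor has as many roots in \<open>GF(q)\<close> as an Artin--Schreier polynomial
  \<open>y\<^sup>3 - y + a\<close>, namely none or three. Hence \<open>beta f 1 b\<close> takes the values 2 and 5: parameters
  without a root exist by a trace argument once \<open>q \<ge> 9\<close>, parameters with a root by counting
  the kernel of an additive map once \<open>q \<ge> 27\<close>.
\<close>

text \<open>The library's \<open>finite_field_power_card_eq_same\<close> needs the sort \<open>finite_field\<close>; here the
  statement is obtained from Lagrange's theorem in the multiplicative group.\<close>

lemma power_card_UNIV_eq_self:
  fixes x :: "'a::{field,finite}"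
  shows "x ^ card (UNIV :: 'a set) = x"
proof (cases "x = 0")
  case False
  define R where "R = (ring_of_type_algebra :: 'a ring)"
  interpret field R unfolding R_def by rule
  have R: "carrier R = UNIV" "\<zero>\<^bsub>R\<^esub> = 0" "\<one>\<^bsub>R\<^esub> = 1" "y [^]\<^bsub>R\<^esub> n = y ^ n"
    for y :: 'a and n
    by (simp_all add: R_def ring_of_type_algebra_def, induction n) simp_all
  have order: "Coset.order (Multiplicative_Group.mult_of R) = card (UNIV :: 'a set) - 1"
    using order_mult_of R(1) by (simp add: Coset.order_def)
  have "x [^]\<^bsub>Multiplicative_Group.mult_of R\<^esub> Coset.order (Multiplicative_Group.mult_of R)
      = \<one>\<^bsub>Multiplicative_Group.mult_of R\<^esub>"
    using False R by (intro group.pow_order_eq_1 field_mult_group) auto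
  hence "x ^ (card (UNIV :: 'a set) - 1) = 1"
    by (simp only: order Multiplicative_Group.nat_pow_mult_of Multiplicative_Group.one_mult_of R)
  hence "x * x ^ (card (UNIV :: 'a set) - 1) = x"
    by simp
  moreover have "Suc (card (UNIV :: 'a set) - 1) = card (UNIV :: 'a set)"
    by (simp add: card_gt_0_iff)
  ultimately show ?thesis
    by (metis power_Suc)
qed (simp add: card_gt_0_iff)

lemma card_le_mult_card_image:
  assumes "finite A" and "\<And>y. y \<in> f ` A \<Longrightarrow> card {x \<in> A. f x = y} \<le> k"
  shows "card A \<le> k * card (f ` A)"
proof -
  have "card A = card (\<Union>y\<in>f ` A. {x \<in> A. f x = y})"
    by (rule arg_cong[where f = card]) auto
  also have "\<dots> \<le> (\<Sum>y\<in>f ` A. card {x \<in> A. f x = y})"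
    by (rule card_UN_le) (use assms(1) in simp)
  also have "\<dots> \<le> (\<Sum>y\<in>f ` A. k)"
    by (rule sum_mono) (use assms(2) in auto)
  finally show ?thesis
    by (simp add: mult.commute)
qed

lemma card_le_card_kernel_mult_card_image:
  fixes L :: "'g::ab_group_add \<Rightarrow> 'h::ab_group_add"
  assumes "finite S" and "\<And>x y. x \<in> S \<Longrightarrow> y \<in> S \<Longrightarrow> x - y \<in> S"
    and "\<And>x y. L (x - y) = L x - L y"
  shows "card S \<le> card {x \<in> S. L x = 0} * card (L ` S)"
proof (rule card_le_mult_card_image[OF assms(1)])
  fix v assume "v \<in> L ` S"
  then obtain x0 where x0: "x0 \<in> S" "L x0 = v"
    by blast
  have "{x \<in> S. L x = v} \<subseteq> (\<lambda>k. k + x0) ` {x \<in> S. L x = 0}"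
  proof
    fix x assume "x \<in> {x \<in> S. L x = v}"
    hence "x - x0 \<in> {x \<in> S. L x = 0}"
      using x0 assms(2,3) by auto
    thus "x \<in> (\<lambda>k. k + x0) ` {x \<in> S. L x = 0}"
      by (rule rev_image_eqI) simp
  qed
  hence "card {x \<in> S. L x = v} \<le> card ((\<lambda>k. k + x0) ` {x \<in> S. L x = 0})"
    using assms(1) by (intro card_mono) auto
  also have "\<dots> \<le> card {x \<in> S. L x = 0}"
    by (rule card_image_le) (use assms(1) in simp)
  finally show "card {x \<in> S. L x = v} \<le> card {x \<in> S. L x = 0}" .
qed

lemma card_power_eq_affine_le:
  fixes a b :: "'a::field"
  assumes "n \<ge> 2"
  shows "card {x. x ^ n = a * x + b} \<le> n"
proof -
  define p where "p = monom 1 n + [:- b, - a:]"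
  have "degree p = n"
    unfolding p_def using assms by (subst degree_add_eq_left) (auto simp: degree_monom_eq)
  moreover have "{x. x ^ n = a * x + b} = {x. poly p x = 0}"
    by (auto simp: p_def poly_monom algebra_simps)
  moreover have "p \<noteq> 0"
    using \<open>degree p = n\<close> assms by auto
  ultimately show ?thesis
    using card_poly_roots_bound[of p] by simp
qed

lemma card_UN_quadratic_roots_le:
  fixes P :: "('a::field \<times> 'a) set"
  assumes "finite P"
  shows "card (\<Union>p \<in> P. {x. x ^ 2 = fst p * x + snd p}) \<le> 2 * card P"
proof -
  have "card (\<Union>p \<in> P. {x. x ^ 2 = fst p * x + snd p}) \<le> (\<Sum>p \<in> P. card {x. x ^ 2 = fst p * x + snd p})"
    by (rule card_UN_le[OF assms])
  also have "\<dots> \<le> (\<Sum>p \<in> P. 2)"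
    by (rule sum_mono) (rule card_power_eq_affine_le, simp)
  finally show ?thesis
    by simp
qed

lemma nu_pos:
  fixes f :: "'a::{field,finite} \<Rightarrow> 'a"
  assumes "b \<noteq> 0" and "beta f 1 b = i"
  shows "nu f i > 0"
  unfolding nu_def using assms by (auto simp: card_gt_0_iff)

section \<open>Characteristic three\<close>

lemma char3_eqI:
  fixes x y h :: "'a::comm_ring_1"
  assumes "(3::'a) = 0" and "x = y + 3 * h"
  shows "x = y"
  using assms by simp

lemma char3_add_self:
  fixes x :: "'a::comm_ring_1"
  assumes "(3::'a) = 0"
  shows "x + x = - x"
  using char3_eqI[OF assms, of "x + x" "- x" x] by (simp add: algebra_simps)

lemma char3_cube_add:
  fixes x y :: "'a::comm_ring_1"
  assumes "(3::'a) = 0"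
  shows "(x + y) ^ 3 = x ^ 3 + y ^ 3"
  by (rule char3_eqI[OF assms, where h = "x^2 * y + x * y^2"])
    (simp add: algebra_simps power2_eq_square power3_eq_cube)

lemma char3_cube_diff:
  fixes x y :: "'a::comm_ring_1"
  assumes "(3::'a) = 0"
  shows "(x - y) ^ 3 = x ^ 3 - y ^ 3"
  using char3_cube_add[OF assms, of x "- y"] by simp

lemma cube_eq_self_iff:
  fixes x :: "'a::idom"
  shows "x ^ 3 = x \<longleftrightarrow> x = 0 \<or> x = 1 \<or> x = -1"
proof -
  have "x ^ 3 - x = x * (x - 1) * (x + 1)"
    by Groebner_Basis.algebra
  hence "x ^ 3 = x \<longleftrightarrow> x * (x - 1) * (x + 1) = 0"
    by (metis right_minus_eq)
  thus ?thesis
    by (simp add: eq_neg_iff_add_eq_0)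
qed

lemma char3_one_neq_minus_one:
  assumes "(3::'a::field) = 0"
  shows "(1::'a) \<noteq> -1"
proof
  assume "(1::'a) = -1"
  moreover have "(1::'a) + 1 = -1"
    by (rule char3_add_self[OF assms])
  ultimately show False
    by simp
qed

lemma char3_artin_schreier_roots:
  fixes y y0 k :: "'a::field"
  assumes "(3::'a) = 0" and "y0 ^ 3 - y0 + k = 0"
  shows "y ^ 3 - y + k = 0 \<longleftrightarrow> y = y0 \<or> y = y0 + 1 \<or> y = y0 - 1"
proof -
  have "y ^ 3 - y + k = (y - y0) ^ 3 - (y - y0)"
    using assms by (simp add: char3_cube_diff algebra_simps)
  also have "\<dots> = 0 \<longleftrightarrow> y - y0 = 0 \<or> y - y0 = 1 \<or> y - y0 = -1"
    using cube_eq_self_iff[of "y - y0"] by simp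
  finally show ?thesis
    by (auto simp: algebra_simps)
qed

section \<open>Conjugation in characteristic three\<close>

definition quintic :: "'a::field \<Rightarrow> 'a \<Rightarrow> 'a \<Rightarrow> 'a" where
  "quintic A B n = n ^ 3 * (n + 1) ^ 2 - A ^ 2 * (n + 1) ^ 2 + B ^ 2 * n ^ 2"

lemma quintic_eq_0_iff:
  fixes A B n :: "'a::field"
  assumes "n \<noteq> 0" and "n + 1 \<noteq> 0"
  shows "quintic A B n = 0 \<longleftrightarrow> n = (A / n) ^ 2 - (B / (n + 1)) ^ 2"
proof -
  define num where "num = A ^ 2 * (n + 1) ^ 2 - B ^ 2 * n ^ 2"
  define den where "den = n ^ 2 * (n + 1) ^ 2"
  have "den \<noteq> 0"
    using assms by (simp add: den_def)
  have "quintic A B n = n * den - num"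
    by (simp add: quintic_def num_def den_def power2_eq_square power3_eq_cube algebra_simps)
  hence "quintic A B n = 0 \<longleftrightarrow> n = num / den"
    using \<open>den \<noteq> 0\<close> by (simp add: eq_divide_eq)
  also have "num / den = (A / n) ^ 2 - (B / (n + 1)) ^ 2"
    using assms by (simp add: num_def den_def power_divide diff_frac_eq)
  finally show ?thesis .
qed

locale char3_conjugation =
  fixes c :: "'a::field \<Rightarrow> 'a"
  assumes c_add [simp]: "c (x + y) = c x + c y"
    and c_mult [simp]: "c (x * y) = c x * c y"
    and c_c [simp]: "c (c x) = x"
    and c_one [simp]: "c 1 = 1"
    and three: "(3::'a) = 0"
begin

lemma c_zero [simp]: "c 0 = 0"
  by (metis add.right_neutral add_left_cancel c_add)

lemma c_minus [simp]: "c (- x) = - c x"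
  using c_add[of x "- x"] by (metis add.commute c_zero eq_neg_iff_add_eq_0 right_minus)

lemma c_diff [simp]: "c (x - y) = c x - c y"
  using c_add[of x "- y"] by simp

lemma c_eq_0_iff [simp]: "c x = 0 \<longleftrightarrow> x = 0"
  by (metis c_c c_zero)

lemma c_inverse [simp]: "c (inverse x) = inverse (c x)"
proof (cases "x = 0")
  case False
  hence "c x * c (inverse x) = 1"
    by (simp flip: c_mult)
  thus ?thesis
    by (simp add: inverse_unique)
qed simp

lemma c_divide [simp]: "c (x / y) = c x / c y"
  by (simp add: divide_inverse)

lemma c_power [simp]: "c (x ^ n) = c x ^ n"
  by (induction n) simp_all

lemma c_of_nat [simp]: "c (of_nat n) = of_nat n"
  by (induction n) simp_all

lemma c_numeral [simp]: "c (numeral k) = numeral k"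
  using c_of_nat[of "numeral k"] by simp

lemmas add_self = char3_add_self[OF three]

lemma eq_minus_self_iff: "x = - x \<longleftrightarrow> x = (0::'a)"
proof
  assume "x = - x"
  hence "x + x = 0"
    by (metis add.right_inverse)
  thus "x = 0"
    using add_self[of x] by simp
qed simp

lemma four_eq_one: "(4::'a) = 1"
proof -
  have "(4::'a) = 3 + 1"
    by simp
  thus ?thesis
    using three by simp
qed

lemma fixed_artin_schreier_roots:
  assumes "c y0 = y0" and "y0 ^ 3 - y0 + k = 0"
  shows "{y. c y = y \<and> y ^ 3 - y + k = 0} = {y0, y0 + 1, y0 - 1}"
  using char3_artin_schreier_roots[OF three assms(2)] assms(1) by auto

lemma finite_fixed_artin_schreier_roots: "finite {y. c y = y \<and> y ^ 3 - y + k = 0}"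
proof (cases "\<exists>y0. c y0 = y0 \<and> y0 ^ 3 - y0 + k = 0")
  case True
  thus ?thesis
    using fixed_artin_schreier_roots by auto
next
  case False
  hence "{y. c y = y \<and> y ^ 3 - y + k = 0} = {}"
    by blast
  thus ?thesis
    by (simp only: finite.emptyI)
qed

lemma card_fixed_artin_schreier_roots:
  assumes "c y0 = y0" and "y0 ^ 3 - y0 + k = 0"
  shows "card {y. c y = y \<and> y ^ 3 - y + k = 0} = 3"
  unfolding fixed_artin_schreier_roots[OF assms]
  using char3_one_neq_minus_one[OF three] by (auto simp: card_insert_if)

definition F :: "'a \<Rightarrow> 'a" where
  "F u = c u * u ^ 2 + c u - u"

definition E :: "'a \<Rightarrow> 'a" where
  "E u = u ^ 2 - u * c u"

lemma F_minus: "F (- u) = - F u"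
  unfolding F_def by simp

lemma E_minus: "E (- u) = E u"
  unfolding E_def by simp

lemma E_eq_mult: "E u = u * (u - c u)"
  unfolding E_def by (simp add: power2_eq_square algebra_simps)

lemma c_F: "c (F u) = F (c u)"
  unfolding F_def by simp

lemma E_eq_imp_eq_or_minus:
  assumes "c u \<noteq> u" and "E u = E v"
  shows "v = u \<or> v = - u"
proof -
  have sum: "E x + c (E x) = (x - c x) ^ 2" and diff: "E x - c (E x) = (x - c x) * (x + c x)" for x
    unfolding E_def by (simp_all add: power2_eq_square algebra_simps)
  have "(v - c v) ^ 2 = (u - c u) ^ 2"
    using sum[of u] sum[of v] assms(2) by simp
  hence sign: "v - c v = u - c u \<or> v - c v = - (u - c u)"
    by (simp add: power2_eq_iff)
  have prod: "(v - c v) * (v + c v) = (u - c u) * (u + c u)"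
    using diff[of u] diff[of v] assms(2) by simp
  have nz: "u - c u \<noteq> 0"
    using assms(1) by simp
  from sign have "v - c v = u - c u \<and> v + c v = u + c u \<or> v - c v = - (u - c u) \<and> v + c v = - (u + c u)"
  proof
    assume h: "v - c v = u - c u"
    hence "(u - c u) * (v + c v) = (u - c u) * (u + c u)"
      using prod by simp
    with nz h show ?thesis
      by simp
  next
    assume h: "v - c v = - (u - c u)"
    hence "(u - c u) * (- (v + c v)) = (u - c u) * (u + c u)"
      using prod by (metis mult_minus_left mult_minus_right)
    with nz h show ?thesis
      by (metis minus_minus mult_left_cancel)
  qed
  moreover have "x = - ((x + c x) + (x - c x))" for x
    using add_self[of x] by (simp add: algebra_simps)
  ultimately show ?thesis
    by (metis minus_add_distrib minus_minus)
qed

lemma E_eq_and_F_diff_iff: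
  assumes "c b \<noteq> b"
  shows "E u = E v \<and> F u - F v = b \<longleftrightarrow> v = - u \<and> F u = - b"
proof
  assume *: "E u = E v \<and> F u - F v = b"
  have "c u \<noteq> u"
  proof
    assume cu: "c u = u"
    hence "v * (v - c v) = 0"
      using * by (simp add: E_eq_mult)
    hence "c v = v"
      by (metis c_zero eq_iff_diff_eq_0 mult_eq_0_iff)
    hence "c b = b"
      using * cu by (metis c_F c_diff)
    with assms show False
      by simp
  qed
  with * have "v = u \<or> v = - u"
    by (intro E_eq_imp_eq_or_minus) simp_all
  moreover have "v \<noteq> u"
    using * assms by auto
  ultimately have "v = - u"
    by simp
  moreover have "- F u = b"
    using * \<open>v = - u\<close> add_self[of "F u"] by (simp add: F_minus)
  ultimately show "v = - u \<and> F u = - b"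
    by (simp add: minus_equation_iff)
next
  assume "v = - u \<and> F u = - b"
  thus "E u = E v \<and> F u - F v = b"
    using add_self[of "F u"] by (simp add: E_minus F_minus)
qed

text \<open>Modulo 3, the difference and the sum of the two shifted equations are the conditions on
  \<open>E\<close> and on \<open>F\<close>.\<close>

lemma shifted_system_iff:
  "(c (1 + u) * (1 + u) ^ 2 - c (1 + v) * (1 + v) ^ 2 = b \<and>
    c (2 + u) * (2 + u) ^ 2 - c (2 + v) * (2 + v) ^ 2 = b)
   \<longleftrightarrow> E u = E v \<and> F u - F v = b"
proof -
  define g1 where "g1 w = (1 + c w) * (1 + w) ^ 2" for w
  define g2 where "g2 w = (2 + c w) * (2 + w) ^ 2" for w
  have dif: "g1 w - g2 w = - 1 - E w" for w
    unfolding g1_def g2_def E_def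
    by (rule char3_eqI[OF three, where h = "- (2 + 2 * w + c w + w * c w)"]) Groebner_Basis.algebra
  have sum: "g1 w + g2 w = - F w" for w
    unfolding g1_def g2_def F_def
    by (rule char3_eqI[OF three, where h = "3 + 3 * w + w ^ 2 + 2 * c w + 2 * w * c w + c w * w ^ 2"])
      Groebner_Basis.algebra
  have "(g1 u - g1 v = b \<and> g2 u - g2 v = b)
      \<longleftrightarrow> g1 u - g1 v = g2 u - g2 v \<and> (g1 u - g1 v) + (g2 u - g2 v) = - b"
    using add_self[of b] add_self[of "g1 u - g1 v"] by (metis minus_equation_iff)
  also have "\<dots> \<longleftrightarrow> g1 u - g2 u = g1 v - g2 v \<and> (g1 u + g2 u) - (g1 v + g2 v) = - b"
    by (auto simp: algebra_simps)
  also have "\<dots> \<longleftrightarrow> E u = E v \<and> F u - F v = b"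
    unfolding dif sum by (auto simp: algebra_simps)
  finally show ?thesis
    by (simp add: g1_def g2_def)
qed

lemma pairs_eq_image:
  assumes "c b \<noteq> b"
  shows "{(x, y). c x * x ^ 2 - c y * y ^ 2 = b \<and> c (x + 1) * (x + 1) ^ 2 - c (y + 1) * (y + 1) ^ 2 = b}
    = (\<lambda>u. (1 + u, 1 - u)) ` {u. F u = - b}"
proof -
  have shift: "1 + (x - 1) = x" "2 + (x - 1) = x + 1" for x :: 'a
    by simp_all
  have key: "c x * x ^ 2 - c y * y ^ 2 = b \<and> c (x + 1) * (x + 1) ^ 2 - c (y + 1) * (y + 1) ^ 2 = b
      \<longleftrightarrow> y - 1 = - (x - 1) \<and> F (x - 1) = - b" for x y
    using shifted_system_iff[of "x - 1" "y - 1" b] E_eq_and_F_diff_iff[OF assms, of "x - 1" "y - 1"]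
    unfolding shift by simp
  have img: "(x, y) \<in> (\<lambda>u. (1 + u, 1 - u)) ` {u. F u = - b}
      \<longleftrightarrow> y - 1 = - (x - 1) \<and> F (x - 1) = - b" for x y
  proof
    assume "(x, y) \<in> (\<lambda>u. (1 + u, 1 - u)) ` {u. F u = - b}"
    thus "y - 1 = - (x - 1) \<and> F (x - 1) = - b"
      by (auto simp: algebra_simps)
  next
    assume *: "y - 1 = - (x - 1) \<and> F (x - 1) = - b"
    hence "(x, y) = (1 + (x - 1), 1 - (x - 1))"
      by (simp add: algebra_simps)
    with * show "(x, y) \<in> (\<lambda>u. (1 + u, 1 - u)) ` {u. F u = - b}"
      by blast
  qed
  show ?thesis
  proof (rule Set.set_eqI)
    fix p :: "'a \<times> 'a"
    obtain x y where "p = (x, y)"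
      by (cases p)
    thus "p \<in> {(x, y). c x * x ^ 2 - c y * y ^ 2 = b \<and> c (x + 1) * (x + 1) ^ 2 - c (y + 1) * (y + 1) ^ 2 = b}
      \<longleftrightarrow> p \<in> (\<lambda>u. (1 + u, 1 - u)) ` {u. F u = - b}"
      using key[of x y] img[of x y] by simp
  qed
qed

lemma card_pairs_eq_card_F_fibre:
  assumes "c b \<noteq> b"
  shows "card {(x, y). c x * x ^ 2 - c y * y ^ 2 = b \<and> c (x + 1) * (x + 1) ^ 2 - c (y + 1) * (y + 1) ^ 2 = b}
    = card {u. F u = - b}"
  unfolding pairs_eq_image[OF assms] by (rule card_image) (auto simp: inj_on_def)

lemma F_plus_minus_conj:
  assumes "F u = t"
  shows "t + c t = (u * c u) * (u + c u)" and "t - c t = (u * c u + 1) * (u - c u)"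
proof -
  have t: "t = (u * c u) * u + c u - u"
    using assms unfolding F_def by (simp add: power2_eq_square algebra_simps)
  have "c t = u * c u ^ 2 + u - c u"
    unfolding assms[symmetric] F_def by simp
  hence ct: "c t = (u * c u) * c u + u - c u"
    by (simp add: power2_eq_square mult_ac)
  show "t + c t = (u * c u) * (u + c u)"
    unfolding ct unfolding t by (simp add: algebra_simps)
  have "t - c t = (u * c u - 2) * (u - c u)"
    unfolding ct unfolding t by (simp add: algebra_simps)
  thus "t - c t = (u * c u + 1) * (u - c u)"
    using add_self[of 1] by simp
qed

lemma norm_of_F_solution:
  assumes "F u = t" and "c t \<noteq> t"
  defines "n \<equiv> u * c u"
  shows "c n = n \<and> n \<noteq> 0 \<and> n \<noteq> -1 \<and> quintic (t + c t) (t - c t) n = 0"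
    and "u = - ((t + c t) / n + (t - c t) / (n + 1))"
proof -
  have A: "t + c t = n * (u + c u)" and B: "t - c t = (n + 1) * (u - c u)"
    unfolding n_def using F_plus_minus_conj[OF assms(1)] by simp_all
  have "n \<noteq> 0"
  proof
    assume "n = 0"
    hence "t = 0"
      using assms(1) unfolding F_def n_def by auto
    with assms(2) show False
      by simp
  qed
  moreover have "n + 1 \<noteq> 0"
    using B assms(2) by auto
  ultimately have sum: "u + c u = (t + c t) / n" and dif: "u - c u = (t - c t) / (n + 1)"
    using A B by simp_all
  have "u = - ((u + c u) + (u - c u))"
    using add_self[of u] by (simp add: algebra_simps)
  thus "u = - ((t + c t) / n + (t - c t) / (n + 1))"
    unfolding sum dif .
  have "4 * n = (u + c u) ^ 2 - (u - c u) ^ 2"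
    unfolding n_def by Groebner_Basis.algebra
  hence "n = ((t + c t) / n) ^ 2 - ((t - c t) / (n + 1)) ^ 2"
    unfolding sum dif four_eq_one by simp
  hence "quintic (t + c t) (t - c t) n = 0"
    using \<open>n \<noteq> 0\<close> \<open>n + 1 \<noteq> 0\<close> quintic_eq_0_iff by blast
  moreover have "c (u * c u) = u * c u"
    by (metis c_c c_mult mult.commute)
  hence "c n = n"
    unfolding n_def .
  ultimately show "c n = n \<and> n \<noteq> 0 \<and> n \<noteq> -1 \<and> quintic (t + c t) (t - c t) n = 0"
    using \<open>n \<noteq> 0\<close> \<open>n + 1 \<noteq> 0\<close> by (auto simp: eq_neg_iff_add_eq_0)
qed

lemma F_solution_of_quintic_root:
  assumes "c n = n" and "n \<noteq> 0" and "n \<noteq> -1" and "quintic (t + c t) (t - c t) n = 0"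
  defines "u \<equiv> - ((t + c t) / n + (t - c t) / (n + 1))"
  shows "u * c u = n" and "F u = t"
proof -
  define a where "a = (t + c t) / n"
  define b where "b = (t - c t) / (n + 1)"
  have "n + 1 \<noteq> 0"
    using assms(3) by (auto simp: eq_neg_iff_add_eq_0)
  have u: "u = - (a + b)" and cu: "c u = - (a - b)"
    unfolding u_def a_def b_def using assms(1) by (simp_all add: add.commute minus_divide_left)
  have "n = a ^ 2 - b ^ 2"
    using quintic_eq_0_iff[OF assms(2) \<open>n + 1 \<noteq> 0\<close>] assms(4) unfolding a_def b_def by simp
  thus norm: "u * c u = n"
    unfolding cu unfolding u by (simp add: power2_eq_square algebra_simps)
  have "F u = (u * c u) * u + c u - u"
    unfolding F_def by (simp add: power2_eq_square algebra_simps)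
  also have "\<dots> = n * u + c u - u"
    by (simp only: norm)
  also have "\<dots> = - (n * a) - ((n + 1) * b) + 3 * b"
    unfolding cu unfolding u by (simp add: algebra_simps)
  also have "\<dots> = - ((t + c t) + (t - c t))"
    using assms(2) \<open>n + 1 \<noteq> 0\<close> three unfolding a_def b_def by simp
  also have "\<dots> = t"
    using add_self[of t] by (simp add: algebra_simps)
  finally show "F u = t" .
qed

lemma card_F_fibre:
  assumes "c t \<noteq> t"
  shows "card {u. F u = t}
    = card {n. c n = n \<and> n \<noteq> 0 \<and> n \<noteq> -1 \<and> quintic (t + c t) (t - c t) n = 0}"
proof (rule bij_betw_same_card[of "\<lambda>u. u * c u"],
    rule bij_betw_byWitness[where f' = "\<lambda>n. - ((t + c t) / n + (t - c t) / (n + 1))"])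
qed (use norm_of_F_solution[OF _ assms] F_solution_of_quintic_root in auto)

end

section \<open>A family of parameters for which the quintic splits\<close>

text \<open>Polynomial identities over the integers up to an explicit multiple of 3; by \<open>char3_eqI\<close>
  they become identities in characteristic three.\<close>

lemma quintic_factorization_certificate:
  fixes n T w :: "'a::idom"
  defines "D \<equiv> 1 - T * w ^ 2" and "Pp \<equiv> T * (w + 1) ^ 2 - 1" and "Pm \<equiv> T * (w - 1) ^ 2 - 1"
    and "\<phi> \<equiv> w ^ 3 - w"
  shows "D * ((T - 1) * D ^ 4 * n ^ 3 * (n + 1) ^ 2 - Pp ^ 2 * Pm ^ 2 * (n + 1) ^ 2 + T ^ 5 * \<phi> ^ 2 * n ^ 2)
    = (D * n - Pm) * (D * n - Pp) *
      ((T - 1) * (D * n + 1) ^ 3 - (T - 1) * T * (D * n + 1) ^ 2 + \<phi> ^ 2 * T ^ 3)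
    + 3 * (
      n^4*T^6*w^8 - 2*n^4*T^5*w^8 - 4*n^4*T^5*w^6 + n^4*T^4*w^8 + 8*n^4*T^4*w^6 + 6*n^4*T^4*w^4
      - 4*n^4*T^3*w^6 - 12*n^4*T^3*w^4 - 4*n^4*T^3*w^2 + 6*n^4*T^2*w^4 + 8*n^4*T^2*w^2 + n^4*T^2
      - 4*n^4*T*w^2 - 2*n^4*T + n^4 + n^3*T^6*w^6 - 2*n^3*T^5*w^8 - 5*n^3*T^5*w^6 - 3*n^3*T^5*w^4
      + 2*n^3*T^4*w^8 + 13*n^3*T^4*w^6 + 15*n^3*T^4*w^4 + 3*n^3*T^4*w^2 - 9*n^3*T^3*w^6
      - 27*n^3*T^3*w^4 - 15*n^3*T^3*w^2 - n^3*T^3 + 15*n^3*T^2*w^4 + 23*n^3*T^2*w^2 + 5*n^3*T^2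
      - 11*n^3*T*w^2 - 7*n^3*T + 3*n^3 - 2*n^2*T^5*w^8 + 2*n^2*T^5*w^6 - 4*n^2*T^5*w^4
      + 8*n^2*T^4*w^6 + 8*n^2*T^4*w^4 + 6*n^2*T^4*w^2 - 3*n^2*T^3*w^6 - 18*n^2*T^3*w^4
      - 17*n^2*T^3*w^2 - 2*n^2*T^3 + 9*n^2*T^2*w^4 + 20*n^2*T^2*w^2 + 7*n^2*T^2 - 9*n^2*T*w^2
      - 8*n^2*T + 3*n^2 - 2*n*T^5*w^8 + 4*n*T^5*w^6 - 2*n*T^5*w^4 - 2*n*T^4*w^8 + 5*n*T^4*w^6
      - 2*n*T^4*w^4 + 3*n*T^4*w^2 + 5*n*T^3*w^6 - 3*n*T^3*w^4 - 5*n*T^3*w^2 - n*T^3 - 3*n*T^2*w^4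
      + 3*n*T^2*w^2 + 3*n*T^2 - n*T*w^2 - 3*n*T + n - T^4*w^8 + 2*T^4*w^6 - T^4*w^4 + 3*T^3*w^6
      + T^3*w^2 - 3*T^2*w^4 - 2*T^2*w^2 + T*w^2)"
  unfolding D_def Pp_def Pm_def \<phi>_def by Groebner_Basis.algebra

lemma cubic_factorization_certificate:
  fixes T w :: "'a::idom"
  shows "(T - 1) * (T * (w - 1) ^ 2) ^ 3 - (T - 1) * T * (T * (w - 1) ^ 2) ^ 2 + (w ^ 3 - w) ^ 2 * T ^ 3
      = T ^ 3 * w * (w + 1) * (w - 1) ^ 2 * (T * (w - 1) ^ 2 - 1)
        + 3 * (T ^ 3 * w * (w - 1) ^ 2 * (2 * w ^ 2 - w + 1 - T * (w - 1) ^ 2))"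
    and "(T - 1) * (T * (w + 1) ^ 2) ^ 3 - (T - 1) * T * (T * (w + 1) ^ 2) ^ 2 + (w ^ 3 - w) ^ 2 * T ^ 3
      = T ^ 3 * w * (w - 1) * (w + 1) ^ 2 * (T * (w + 1) ^ 2 - 1)
        + 3 * (T ^ 3 * w * (w + 1) ^ 2 * (T * (w + 1) ^ 2 - 2 * w ^ 2 - w - 1))"
  by Groebner_Basis.algebra+

lemma artin_schreier_substitution:
  fixes p T \<theta> s :: "'a::field"
  assumes "s \<noteq> 0" and "\<theta> \<noteq> 0"
  shows "(p * T / (\<theta> * s)) ^ 3 - p * T / (\<theta> * s) + p / \<theta>
    = p * (\<theta> ^ 2 * s ^ 3 - \<theta> ^ 2 * T * s ^ 2 + p ^ 2 * T ^ 3) / (\<theta> ^ 3 * s ^ 3)"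
  using assms by (simp add: field_simps power2_eq_square power3_eq_cube)

locale split_family = char3_conjugation c for c :: "'a::field \<Rightarrow> 'a" +
  fixes z w :: 'a
  assumes z_norm: "z * c z = -1" and z_not_fixed: "c z \<noteq> z"
    and w_fixed: "c w = w" and w_cube: "w ^ 3 \<noteq> w"
begin

text \<open>\<open>\<tau>\<close> is chosen so that \<open>\<tau> + c \<tau> = A\<close> and \<open>\<tau> - c \<tau> = B\<close>, which makes the quintic factor
  as in \<open>quintic_factorization\<close>.\<close>

definition "\<theta> = - (z + c z)"
definition "\<omega> = z - c z"
definition "T = 1 + \<theta> ^ 2"
definition "D = 1 - T * w ^ 2"
definition "Pp = T * (w + 1) ^ 2 - 1"
definition "Pm = T * (w - 1) ^ 2 - 1"
definition "\<phi> = w ^ 3 - w"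
definition "A = Pp * Pm / (\<theta> * D ^ 2)"
definition "B = T ^ 2 * \<omega> * \<phi> / (\<theta> * D ^ 2)"
definition "\<tau> = - (A + B)"
definition "K n = \<theta> ^ 2 * (D * n + 1) ^ 3 - \<theta> ^ 2 * T * (D * n + 1) ^ 2 + \<phi> ^ 2 * T ^ 3"
definition "n_of y = (\<phi> * T / (\<theta> * y) - 1) / D"

lemma c_\<theta>: "c \<theta> = \<theta>"
  unfolding \<theta>_def by (simp add: add.commute)

lemma c_\<omega>: "c \<omega> = - \<omega>"
  unfolding \<omega>_def by simp

lemma \<omega>_square: "\<omega> ^ 2 = T"
proof -
  have "\<omega> ^ 2 = \<theta> ^ 2 - 4 * (z * c z)"
    unfolding \<omega>_def \<theta>_def by Groebner_Basis.algebra
  thus ?thesis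
    unfolding T_def z_norm four_eq_one by simp
qed

lemma T_not_square:
  assumes "c x = x"
  shows "T \<noteq> x ^ 2"
proof
  assume "T = x ^ 2"
  hence "\<omega> = x \<or> \<omega> = - x"
    using \<omega>_square by (simp add: power2_eq_iff)
  hence "c \<omega> = \<omega>"
    using assms by auto
  hence "\<omega> = 0"
    using c_\<omega> eq_minus_self_iff by metis
  thus False
    using z_not_fixed unfolding \<omega>_def by simp
qed

lemma T_mult_square_neq_1:
  assumes "c x = x"
  shows "T * x ^ 2 \<noteq> 1"
proof
  assume "T * x ^ 2 = 1"
  hence "x \<noteq> 0"
    by auto
  with \<open>T * x ^ 2 = 1\<close> have "T = (1 / x) ^ 2"
    by (simp add: power_one_over eq_divide_eq)
  with assms T_not_square[of "1 / x"] show False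
    by simp
qed

lemma c_T: "c T = T"
  unfolding T_def by (simp add: c_\<theta>)

lemma c_D: "c D = D"
  unfolding D_def by (simp add: c_T w_fixed)

lemma c_Pp: "c Pp = Pp"
  unfolding Pp_def by (simp add: c_T w_fixed)

lemma c_Pm: "c Pm = Pm"
  unfolding Pm_def by (simp add: c_T w_fixed)

lemma c_\<phi>: "c \<phi> = \<phi>"
  unfolding \<phi>_def by (simp add: w_fixed)

lemma w_neq: "w \<noteq> 0" "w - 1 \<noteq> 0" "w + 1 \<noteq> 0"
  using w_cube cube_eq_self_iff[of w] by (auto simp: eq_neg_iff_add_eq_0)

lemma \<phi>_neq_0: "\<phi> \<noteq> 0"
  unfolding \<phi>_def using w_cube by simp

lemma \<theta>_neq_0: "\<theta> \<noteq> 0"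
  using T_not_square[of 1] unfolding T_def by auto

lemma T_neq_0: "T \<noteq> 0"
  using T_not_square[of 0] by simp

lemma D_neq_0: "D \<noteq> 0"
  using T_mult_square_neq_1[OF w_fixed] unfolding D_def by simp

lemma Pp_neq_0: "Pp \<noteq> 0"
  using T_mult_square_neq_1[of "w + 1"] w_fixed unfolding Pp_def by simp

lemma Pm_neq_0: "Pm \<noteq> 0"
  using T_mult_square_neq_1[of "w - 1"] w_fixed unfolding Pm_def by simp

lemma c_A: "c A = A"
  unfolding A_def by (simp add: c_Pp c_Pm c_\<theta> c_D)

lemma c_B: "c B = - B"
  unfolding B_def by (simp add: c_T c_\<omega> c_\<phi> c_\<theta> c_D)

lemma B_neq_0: "B \<noteq> 0"
  unfolding B_def using T_neq_0 \<phi>_neq_0 \<theta>_neq_0 D_neq_0 z_not_fixed by (simp add: \<omega>_def)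

lemma c_\<tau>_neq: "c \<tau> \<noteq> \<tau>" and \<tau>_plus_c: "\<tau> + c \<tau> = A" and \<tau>_minus_c: "\<tau> - c \<tau> = B"
proof -
  have c\<tau>: "c \<tau> = - (A - B)"
    unfolding \<tau>_def by (simp add: c_A c_B)
  show "c \<tau> \<noteq> \<tau>"
    unfolding c\<tau> unfolding \<tau>_def using B_neq_0 eq_minus_self_iff[of B] by auto
  show "\<tau> + c \<tau> = A"
    unfolding c\<tau> unfolding \<tau>_def using add_self[of A] by (simp add: algebra_simps)
  show "\<tau> - c \<tau> = B"
    unfolding c\<tau> unfolding \<tau>_def using add_self[of B] by (simp add: algebra_simps)
qed

lemma \<theta>_square: "\<theta> ^ 2 = T - 1"
  unfolding T_def by simp

lemma quintic_factorization:
  "\<theta> ^ 2 * D ^ 5 * quintic A B n = (D * n - Pm) * (D * n - Pp) * K n"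
proof -
  have "\<theta> * D ^ 2 \<noteq> 0"
    using \<theta>_neq_0 D_neq_0 by simp
  hence "(\<theta> * D ^ 2) * A = Pp * Pm" and "(\<theta> * D ^ 2) * B = T ^ 2 * \<omega> * \<phi>"
    unfolding A_def B_def by simp_all
  hence A2: "(\<theta> * D ^ 2) ^ 2 * A ^ 2 = Pp ^ 2 * Pm ^ 2"
    and B2: "(\<theta> * D ^ 2) ^ 2 * B ^ 2 = T ^ 5 * \<phi> ^ 2"
    using \<omega>_square by Groebner_Basis.algebra+
  have "\<theta> ^ 2 * D ^ 5 * quintic A B n
      = D * (\<theta> ^ 2 * D ^ 4 * n ^ 3 * (n + 1) ^ 2 - ((\<theta> * D ^ 2) ^ 2 * A ^ 2) * (n + 1) ^ 2
          + ((\<theta> * D ^ 2) ^ 2 * B ^ 2) * n ^ 2)"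
    unfolding quintic_def by Groebner_Basis.algebra
  also have "\<dots> = (D * n - Pm) * (D * n - Pp) * K n"
    unfolding A2 B2 unfolding K_def \<theta>_square D_def Pp_def Pm_def \<phi>_def
    by (rule char3_eqI[OF three quintic_factorization_certificate])
  finally show ?thesis .
qed

lemma quintic_eq_0_iff_factors:
  "quintic A B n = 0 \<longleftrightarrow> n = Pm / D \<or> n = Pp / D \<or> K n = 0"
proof -
  have "\<theta> ^ 2 * D ^ 5 \<noteq> 0"
    using \<theta>_neq_0 D_neq_0 by simp
  hence "quintic A B n = 0 \<longleftrightarrow> (D * n - Pm) * (D * n - Pp) * K n = 0"
    unfolding quintic_factorization[symmetric] by simp
  also have "\<dots> \<longleftrightarrow> D * n = Pm \<or> D * n = Pp \<or> K n = 0"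
    by simp
  also have "\<dots> \<longleftrightarrow> n = Pm / D \<or> n = Pp / D \<or> K n = 0"
    using D_neq_0 by (auto simp: eq_divide_eq mult.commute)
  finally show ?thesis .
qed

lemma K_Pm_neq_0: "K (Pm / D) \<noteq> 0"
proof -
  have "D * (Pm / D) + 1 = T * (w - 1) ^ 2"
    using D_neq_0 by (simp add: Pm_def)
  hence "K (Pm / D) = T ^ 3 * w * (w + 1) * (w - 1) ^ 2 * Pm"
    unfolding K_def \<theta>_square \<phi>_def Pm_def
    by (simp only:) (rule char3_eqI[OF three cubic_factorization_certificate(1)])
  thus ?thesis
    using T_neq_0 w_neq Pm_neq_0 by simp
qed

lemma K_Pp_neq_0: "K (Pp / D) \<noteq> 0"
proof -
  have "D * (Pp / D) + 1 = T * (w + 1) ^ 2"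
    using D_neq_0 by (simp add: Pp_def)
  hence "K (Pp / D) = T ^ 3 * w * (w - 1) * (w + 1) ^ 2 * Pp"
    unfolding K_def \<theta>_square \<phi>_def Pp_def
    by (simp only:) (rule char3_eqI[OF three cubic_factorization_certificate(2)])
  thus ?thesis
    using T_neq_0 w_neq Pp_neq_0 by simp
qed

text \<open>The zeros of \<open>K\<close> correspond, via \<open>y = \<phi> T / (\<theta> (D n + 1))\<close>, to the roots of the
  Artin--Schreier polynomial \<open>y\<^sup>3 - y + \<phi> / \<theta>\<close>.\<close>

lemma K_n_of_eq_0_iff:
  assumes "y \<noteq> 0"
  shows "K (n_of y) = 0 \<longleftrightarrow> y ^ 3 - y + \<phi> / \<theta> = 0"
proof -
  define s where "s = D * n_of y + 1"
  have s: "s = \<phi> * T / (\<theta> * y)"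
    unfolding s_def n_of_def using D_neq_0 by simp
  hence "s \<noteq> 0"
    using assms \<phi>_neq_0 T_neq_0 \<theta>_neq_0 by simp
  have y: "y = \<phi> * T / (\<theta> * s)"
    unfolding s using assms \<phi>_neq_0 T_neq_0 \<theta>_neq_0 by simp
  have "y ^ 3 - y + \<phi> / \<theta> = \<phi> * K (n_of y) / (\<theta> ^ 3 * s ^ 3)"
    unfolding K_def s_def[symmetric] unfolding y
    by (rule artin_schreier_substitution[OF \<open>s \<noteq> 0\<close> \<theta>_neq_0])
  thus ?thesis
    using \<phi>_neq_0 \<theta>_neq_0 \<open>s \<noteq> 0\<close> by simp
qed

lemma K_eq_0_imp_n_of:
  assumes "K n = 0"
  obtains y where "y \<noteq> 0" and "n = n_of y"
proof
  have "D * n + 1 \<noteq> 0"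
    using assms \<phi>_neq_0 T_neq_0 unfolding K_def by auto
  thus "\<phi> * T / (\<theta> * (D * n + 1)) \<noteq> 0"
    using \<phi>_neq_0 T_neq_0 \<theta>_neq_0 by simp
  show "n = n_of (\<phi> * T / (\<theta> * (D * n + 1)))"
    unfolding n_of_def using \<open>D * n + 1 \<noteq> 0\<close> \<phi>_neq_0 T_neq_0 \<theta>_neq_0 D_neq_0
    by (simp add: field_simps)
qed

lemma c_n_of: "c (n_of y) = n_of (c y)"
  unfolding n_of_def by (simp add: c_\<phi> c_T c_\<theta> c_D)

lemma n_of_inj:
  assumes "y1 \<noteq> 0" and "y2 \<noteq> 0" and "n_of y1 = n_of y2"
  shows "y1 = y2"
  using assms D_neq_0 \<phi>_neq_0 T_neq_0 \<theta>_neq_0 unfolding n_of_def by (simp add: field_simps)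

lemma artin_schreier_root_neq_0:
  assumes "y ^ 3 - y + \<phi> / \<theta> = 0"
  shows "y \<noteq> 0"
proof
  assume "y = 0"
  with assms have "\<phi> / \<theta> = 0"
    by (simp add: power_0_left)
  with \<phi>_neq_0 \<theta>_neq_0 show False
    by simp
qed

lemma fixed_K_zeros_eq: "{n. c n = n \<and> K n = 0} = n_of ` {y. c y = y \<and> y ^ 3 - y + \<phi> / \<theta> = 0}"
proof (intro Set.set_eqI iffI)
  fix n
  assume "n \<in> {n. c n = n \<and> K n = 0}"
  hence "c n = n" and "K n = 0"
    by simp_all
  then obtain y where "y \<noteq> 0" and n: "n = n_of y"
    using K_eq_0_imp_n_of by blast
  have "n_of (c y) = n_of y"
    using \<open>c n = n\<close> unfolding n c_n_of .
  hence "c y = y"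
    by (rule n_of_inj[rotated 2]) (use \<open>y \<noteq> 0\<close> in simp_all)
  moreover have "y ^ 3 - y + \<phi> / \<theta> = 0"
    using \<open>K n = 0\<close> unfolding n K_n_of_eq_0_iff[OF \<open>y \<noteq> 0\<close>] .
  ultimately show "n \<in> n_of ` {y. c y = y \<and> y ^ 3 - y + \<phi> / \<theta> = 0}"
    unfolding n by blast
next
  fix n
  assume "n \<in> n_of ` {y. c y = y \<and> y ^ 3 - y + \<phi> / \<theta> = 0}"
  then obtain y where "c y = y" and root: "y ^ 3 - y + \<phi> / \<theta> = 0" and n: "n = n_of y"
    by blast
  thus "n \<in> {n. c n = n \<and> K n = 0}"
    using artin_schreier_root_neq_0[OF root] by (simp add: c_n_of K_n_of_eq_0_iff)
qed

lemma quintic_roots_eq: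
  "{n. c n = n \<and> n \<noteq> 0 \<and> n \<noteq> -1 \<and> quintic A B n = 0}
    = {Pm / D, Pp / D} \<union> n_of ` {y. c y = y \<and> y ^ 3 - y + \<phi> / \<theta> = 0}"
proof -
  have "quintic A B 0 \<noteq> 0" and "quintic A B (-1) \<noteq> 0"
    using Pp_neq_0 Pm_neq_0 \<theta>_neq_0 D_neq_0 B_neq_0 by (simp_all add: quintic_def A_def)
  hence "{n. c n = n \<and> n \<noteq> 0 \<and> n \<noteq> -1 \<and> quintic A B n = 0}
      = {n. c n = n \<and> (n = Pm / D \<or> n = Pp / D \<or> K n = 0)}"
    using quintic_eq_0_iff_factors by blast
  also have "\<dots> = {Pm / D, Pp / D} \<union> {n. c n = n \<and> K n = 0}"
    by (auto simp: c_Pm c_Pp c_D)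
  finally show ?thesis
    unfolding fixed_K_zeros_eq .
qed

lemma card_quintic_roots:
  "card {n. c n = n \<and> n \<noteq> 0 \<and> n \<noteq> -1 \<and> quintic A B n = 0}
    = 2 + card {y. c y = y \<and> y ^ 3 - y + \<phi> / \<theta> = 0}"
    (is "_ = 2 + card ?S")
proof -
  have "Pp - Pm = 4 * (T * w)"
    unfolding Pp_def Pm_def by Groebner_Basis.algebra
  hence "Pp - Pm = T * w"
    unfolding four_eq_one by simp
  hence "Pm / D \<noteq> Pp / D"
    using D_neq_0 T_neq_0 w_neq by (auto simp: divide_cancel_right)
  moreover have "K (n_of y) = 0" if "y \<in> ?S" for y
    using that artin_schreier_root_neq_0[of y] by (simp add: K_n_of_eq_0_iff)
  hence "{Pm / D, Pp / D} \<inter> n_of ` ?S = {}"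
    using K_Pm_neq_0 K_Pp_neq_0 by auto
  moreover have "inj_on n_of ?S"
  proof (rule inj_onI)
    fix y1 y2
    assume "y1 \<in> ?S" and "y2 \<in> ?S" and "n_of y1 = n_of y2"
    hence "y1 \<noteq> 0" and "y2 \<noteq> 0"
      using artin_schreier_root_neq_0 by blast+
    thus "y1 = y2"
      by (rule n_of_inj) fact
  qed
  ultimately show ?thesis
    unfolding quintic_roots_eq
    by (simp add: card_Un_disjoint card_image finite_fixed_artin_schreier_roots)
qed

lemma card_F_fibre_\<tau>: "card {u. F u = \<tau>} = 2 + card {y. c y = y \<and> y ^ 3 - y + \<phi> / \<theta> = 0}"
  using card_F_fibre[OF c_\<tau>_neq] unfolding \<tau>_plus_c \<tau>_minus_c card_quintic_roots .

end

section \<open>Fields with \<open>9\<^sup>m\<close> elements\<close>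

context
  fixes m :: nat
  assumes m_ge_1: "m \<ge> 1" and card_UNIV: "card (UNIV :: 'a::{field,finite} set) = (3 ^ m) ^ 2"
begin

lemma CHAR_eq_3: "CHAR('a) = 3"
proof -
  have "prime CHAR('a)"
    by (rule prime_CHAR_semidom, rule finite_imp_CHAR_pos) simp
  moreover have "CHAR('a) dvd 3 ^ (2 * m)"
    using CHAR_dvd_CARD[where 'a = 'a] card_UNIV by (simp add: power_mult mult.commute)
  ultimately have "CHAR('a) dvd 3"
    using prime_dvd_power by blast
  moreover have "\<not> (2::nat) dvd 3"
    by simp
  ultimately have "CHAR('a) \<le> 3" and "CHAR('a) \<noteq> 2"
    using dvd_imp_le by fastforce+
  with prime_ge_2_nat[OF \<open>prime CHAR('a)\<close>] show ?thesis
    by linarith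
qed

lemma three_eq_0: "(3::'a) = 0"
  using of_nat_CHAR[where 'a = 'a] unfolding CHAR_eq_3 by simp

lemma power_3_power_add: "(x + y :: 'a) ^ 3 ^ k = x ^ 3 ^ k + y ^ 3 ^ k"
  by (rule freshmans_dream') (simp_all add: CHAR_eq_3)

lemma frobenius_conjugation: "char3_conjugation (\<lambda>x::'a. x ^ 3 ^ m)"
proof
  fix x y :: 'a
  show "(x + y) ^ 3 ^ m = x ^ 3 ^ m + y ^ 3 ^ m"
    by (rule power_3_power_add)
  show "(x * y) ^ 3 ^ m = x ^ 3 ^ m * y ^ 3 ^ m"
    by (rule power_mult_distrib)
  show "(x ^ 3 ^ m) ^ 3 ^ m = x"
    using power_card_UNIV_eq_self[of x] by (simp add: card_UNIV power2_eq_square flip: power_mult)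
  show "(1::'a) ^ 3 ^ m = 1"
    by simp
  show "(3::'a) = 0"
    by (rule three_eq_0)
qed

interpretation Frob: char3_conjugation "\<lambda>x::'a. x ^ 3 ^ m"
  by (rule frobenius_conjugation)

text \<open>For \<open>c x = x ^ 3 ^ m\<close> the rule \<open>c_power\<close> rewrites \<open>(x ^ 3 ^ m) ^ 3 ^ m\<close> to itself.\<close>

declare Frob.c_power [simp del]

lemma three_power_m_ge_3: "(3::nat) ^ m \<ge> 3"
  using power_increasing[of 1 m "3::nat"] m_ge_1 by simp

lemma norm_in_fixed_field: "((x::'a) ^ (3 ^ m + 1)) ^ 3 ^ m = x ^ (3 ^ m + 1)"
proof -
  have "(x ^ (3 ^ m + 1)) ^ 3 ^ m = (x ^ 3 ^ m) ^ 3 ^ m * x ^ 3 ^ m"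
    by (simp add: power_add)
  thus ?thesis
    by (simp add: power_add mult.commute)
qed

lemma sum_card_norm_fibres:
  "(\<Sum>a \<in> {a::'a. a ^ 3 ^ m = a} - {0}. card {x. x ^ (3 ^ m + 1) = a}) = (3 ^ m) ^ 2 - 1"
proof -
  have "UNIV - {0} = (\<Union>a \<in> {a::'a. a ^ 3 ^ m = a} - {0}. {x. x ^ (3 ^ m + 1) = a})"
    using norm_in_fixed_field by auto
  hence "card (UNIV - {0::'a}) = card (\<Union>a \<in> {a::'a. a ^ 3 ^ m = a} - {0}. {x. x ^ (3 ^ m + 1) = a})"
    by simp
  also have "\<dots> = (\<Sum>a \<in> {a::'a. a ^ 3 ^ m = a} - {0}. card {x. x ^ (3 ^ m + 1) = a})"
    by (rule card_UN_disjoint) auto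
  finally show ?thesis
    by (simp add: card_UNIV)
qed

lemma card_fixed_field: "card {x::'a. x ^ 3 ^ m = x} = 3 ^ m"
  and card_norm_fibre: "a ^ 3 ^ m = a \<Longrightarrow> a \<noteq> 0 \<Longrightarrow> card {x::'a. x ^ (3 ^ m + 1) = a} = 3 ^ m + 1"
proof -
  define q :: nat where "q = 3 ^ m"
  define Fq where "Fq = {x::'a. x ^ q = x} - {0}"
  define fib where "fib a = card {x::'a. x ^ (q + 1) = a}" for a
  have "q \<ge> 3"
    unfolding q_def by (rule three_power_m_ge_3)
  have fib_le: "fib a \<le> q + 1" for a
    using card_power_eq_affine_le[of "q + 1" 0 a] \<open>q \<ge> 3\<close> by (simp add: fib_def)
  have "card {x::'a. x ^ q = x} \<le> q"
    using card_power_eq_affine_le[of q 1 0] \<open>q \<ge> 3\<close> by simp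
  moreover have "(0::'a) \<in> {x. x ^ q = x}"
    using \<open>q \<ge> 3\<close> by simp
  hence "card {x::'a. x ^ q = x} > 0"
    by (metis card_gt_0_iff empty_iff finite)
  ultimately have card_Fq: "card Fq + 1 = card {x::'a. x ^ q = x}" and "card Fq \<le> q - 1"
    unfolding Fq_def using \<open>(0::'a) \<in> {x. x ^ q = x}\<close> by (simp_all add: card_Diff_singleton)
  have sum: "(\<Sum>a \<in> Fq. fib a) = q ^ 2 - 1"
    using sum_card_norm_fibres unfolding Fq_def fib_def q_def .
  also have "\<dots> = (q + 1) * (q - 1)"
    using \<open>q \<ge> 3\<close> by (simp add: power2_eq_square algebra_simps)
  finally have "(q + 1) * (q - 1) \<le> (q + 1) * card Fq"
    using sum_bounded_above[of Fq fib "q + 1"] fib_le by (simp add: mult.commute)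
  hence "q - 1 \<le> card Fq"
    by (metis add_gr_0 mult_le_cancel1 zero_less_one)
  hence "card Fq = q - 1"
    using \<open>card Fq \<le> q - 1\<close> by simp
  thus "card {x::'a. x ^ 3 ^ m = x} = 3 ^ m"
    using card_Fq \<open>q \<ge> 3\<close> unfolding q_def by simp
  have "(\<Sum>a \<in> Fq. q + 1 - fib a) = (q + 1) * card Fq - (\<Sum>a \<in> Fq. fib a)"
    using fib_le by (simp add: sum_subtractf_nat mult.commute)
  also have "\<dots> = 0"
    using sum \<open>card Fq = q - 1\<close> \<open>q \<ge> 3\<close> by (simp add: power2_eq_square algebra_simps)
  finally have "\<forall>a \<in> Fq. q + 1 \<le> fib a"
    by simp
  hence "fib a = q + 1" if "a \<in> Fq" for a
    using that fib_le[of a] le_antisym by blast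
  thus "a ^ 3 ^ m = a \<Longrightarrow> a \<noteq> 0 \<Longrightarrow> card {x::'a. x ^ (3 ^ m + 1) = a} = 3 ^ m + 1"
    unfolding Fq_def fib_def q_def by simp
qed

lemma exists_split_parameter_z:
  assumes "(3::nat) ^ m \<ge> 9"
  obtains z :: 'a where "z * z ^ 3 ^ m = -1" and "z ^ 3 ^ m \<noteq> z"
    and "(- (z + z ^ 3 ^ m)) ^ 3 \<noteq> - (z + z ^ 3 ^ m)"
proof -
  define P :: "('a \<times> 'a) set" where "P = set [(0, -1), (0, 1), (-1, 1), (1, 1)]"
  define Bad where "Bad = (\<Union>p \<in> P. {z::'a. z ^ 2 = fst p * z + snd p})"
  have "card P \<le> 4"
    unfolding P_def by (rule order_trans[OF card_length]) simp
  hence "card Bad \<le> 8"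
    using card_UN_quadratic_roots_le[of P] unfolding Bad_def P_def by simp
  hence "card Bad < card {z::'a. z ^ (3 ^ m + 1) = -1}"
    using card_norm_fibre[of "-1"] assms by (simp add: Frob.c_minus)
  then obtain z where z: "z ^ (3 ^ m + 1) = -1" and "z \<notin> Bad"
    by (metis (mono_tags, lifting) card_mono finite mem_Collect_eq not_le subsetI)
  have norm: "z * z ^ 3 ^ m = -1"
    using z by (simp add: power_add mult.commute)
  moreover have "z ^ 3 ^ m \<noteq> z"
  proof
    assume "z ^ 3 ^ m = z"
    hence "z ^ 2 = 0 * z + -1"
      using norm by (simp add: power2_eq_square)
    with \<open>z \<notin> Bad\<close> show False
      unfolding Bad_def P_def by auto
  qed
  moreover have "(- (z + z ^ 3 ^ m)) ^ 3 \<noteq> - (z + z ^ 3 ^ m)"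
  proof
    assume "(- (z + z ^ 3 ^ m)) ^ 3 = - (z + z ^ 3 ^ m)"
    moreover define s where "s = z + z ^ 3 ^ m"
    ultimately have "- s = 0 \<or> - s = 1 \<or> - s = -1"
      unfolding cube_eq_self_iff by blast
    hence "(s, 1) \<in> P"
      unfolding P_def by (auto simp: minus_equation_iff)
    moreover have "z ^ 2 = s * z + 1"
      using norm unfolding s_def by (simp add: power2_eq_square algebra_simps)
    ultimately have "z \<in> Bad"
      unfolding Bad_def by force
    with \<open>z \<notin> Bad\<close> show False
      by blast
  qed
  ultimately show thesis
    by (rule that)
qed

definition abs_trace :: "'a \<Rightarrow> 'a" where
  "abs_trace y = (\<Sum>k<m. y ^ 3 ^ k)"

lemma abs_trace_add: "abs_trace (x + y) = abs_trace x + abs_trace y"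
  unfolding abs_trace_def by (simp add: power_3_power_add sum.distrib)

lemma abs_trace_minus: "abs_trace (- x) = - abs_trace x"
  unfolding abs_trace_def by (simp add: sum_negf)

lemma abs_trace_diff: "abs_trace (x - y) = abs_trace x - abs_trace y"
  using abs_trace_add[of x "- y"] abs_trace_minus[of y] by simp

lemma abs_trace_cube_diff: "abs_trace (x ^ 3) - abs_trace x = x ^ 3 ^ m - x"
proof -
  have "abs_trace (x ^ 3) - abs_trace x = (\<Sum>k<m. x ^ 3 ^ Suc k - x ^ 3 ^ k)"
    unfolding abs_trace_def by (simp add: sum_subtractf power_mult[symmetric] mult.commute)
  also have "\<dots> = x ^ 3 ^ m - x ^ 3 ^ 0"
    by (rule sum_lessThan_telescope)
  finally show ?thesis
    by simp
qed

lemma abs_trace_artin_schreier: "y ^ 3 ^ m = y \<Longrightarrow> abs_trace (y ^ 3 - y) = 0"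
  using abs_trace_cube_diff[of y] abs_trace_diff[of "y ^ 3" y] by simp

lemma abs_trace_eq_0_if_artin_schreier_root:
  assumes "y ^ 3 ^ m = y" and "y ^ 3 - y + a = 0"
  shows "abs_trace a = 0"
proof -
  have "a = - (y ^ 3 - y)"
    using assms(2) by (metis add.commute eq_neg_iff_add_eq_0)
  hence "abs_trace a = - abs_trace (y ^ 3 - y)"
    by (simp only: abs_trace_minus)
  thus ?thesis
    using abs_trace_artin_schreier[OF assms(1)] by simp
qed

text \<open>Over the fixed field, \<open>abs_trace\<close> annihilates \<open>x\<^sup>3 - x\<close>; for \<open>t = r\<^sup>3\<close> this turns
  \<open>abs_trace ((w\<^sup>3 - w) / t)\<close> into a linear form in \<open>w\<close>.\<close>

lemma abs_trace_div_cube: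
  assumes "r ^ 3 ^ m = r" and "r \<noteq> 0" and "w ^ 3 ^ m = w"
  shows "abs_trace ((w ^ 3 - w) / r ^ 3) = abs_trace ((1 / r - 1 / r ^ 3) * w)"
proof -
  have "(w / r) ^ 3 ^ m = w / r"
    using assms(1,3) by (simp add: Frob.c_divide)
  hence "abs_trace ((w / r) ^ 3) = abs_trace (w / r)"
    using abs_trace_cube_diff[of "w / r"] by simp
  moreover have "(w ^ 3 - w) / r ^ 3 = (w / r) ^ 3 - w / r ^ 3"
    using assms(2) by (simp add: field_simps power3_eq_cube)
  ultimately have "abs_trace ((w ^ 3 - w) / r ^ 3) = abs_trace (w / r - w / r ^ 3)"
    by (simp add: abs_trace_diff)
  also have "w / r - w / r ^ 3 = (1 / r - 1 / r ^ 3) * w"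
    by (simp add: field_simps)
  finally show ?thesis .
qed

lemma card_abs_trace_eq_0_le:
  assumes "a \<noteq> 0"
  shows "card {w::'a. abs_trace (a * w) = 0} \<le> 3 ^ (m - 1)"
proof -
  define p :: "'a poly" where "p = (\<Sum>k<m. monom (a ^ 3 ^ k) (3 ^ k))"
  have "poly p w = abs_trace (a * w)" for w
    unfolding p_def abs_trace_def by (simp add: poly_sum poly_monom power_mult_distrib)
  moreover have "degree p \<le> 3 ^ (m - 1)"
    unfolding p_def
  proof (rule degree_sum_le)
    fix k assume "k \<in> {..<m}"
    hence "(3::nat) ^ k \<le> 3 ^ (m - 1)"
      by (intro power_increasing) auto
    thus "degree (monom (a ^ 3 ^ k) (3 ^ k)) \<le> 3 ^ (m - 1)"
      by (meson degree_monom_le le_trans)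
  qed simp
  moreover have "coeff p (3 ^ (m - 1)) = a ^ 3 ^ (m - 1)"
  proof -
    have "coeff p (3 ^ (m - 1)) = (\<Sum>k<m. if k = m - 1 then a ^ 3 ^ k else 0)"
      unfolding p_def coeff_sum coeff_monom by (intro sum.cong) auto
    thus ?thesis
      using m_ge_1 by simp
  qed
  hence "p \<noteq> 0"
    using assms by auto
  ultimately show ?thesis
    using card_poly_roots_bound[of p] by simp
qed

lemma fixed_cube_root:
  assumes "t ^ 3 ^ m = t"
  obtains r :: 'a where "r ^ 3 ^ m = r" and "r ^ 3 = t"
proof -
  let ?Fq = "{x::'a. x ^ 3 ^ m = x}"
  have "inj_on (\<lambda>x. x ^ 3) ?Fq"
  proof (rule inj_onI)
    fix x y :: 'a
    assume "x ^ 3 = y ^ 3"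
    hence "(x - y) ^ 3 = 0"
      by (simp add: char3_cube_diff[OF three_eq_0])
    thus "x = y"
      by simp
  qed
  moreover have "(\<lambda>x. x ^ 3) ` ?Fq \<subseteq> ?Fq"
    by (auto simp: Frob.c_power)
  ultimately have "(\<lambda>x. x ^ 3) ` ?Fq = ?Fq"
    by (intro endo_inj_surj) simp_all
  with assms that show thesis
    by (metis (mono_tags, lifting) imageE mem_Collect_eq)
qed

lemma exists_split_parameter_w_without_root:
  assumes "(3::nat) ^ m \<ge> 9" and "t ^ 3 ^ m = t" and "t ^ 3 \<noteq> t"
  obtains w :: 'a where "w ^ 3 ^ m = w" and "w ^ 3 \<noteq> w"
    and "\<And>y. y ^ 3 ^ m = y \<Longrightarrow> y ^ 3 - y + (w ^ 3 - w) / t \<noteq> 0"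
proof -
  obtain r where r: "r ^ 3 ^ m = r" "r ^ 3 = t"
    using fixed_cube_root[OF assms(2)] .
  have "t \<noteq> 0" and "r \<noteq> 0"
    using assms(3) r(2) by auto
  define a where "a = 1 / r - 1 / t"
  have "a \<noteq> 0"
    using assms(3) r(2) \<open>t \<noteq> 0\<close> \<open>r \<noteq> 0\<close> by (auto simp: a_def)
  have trace_eq: "abs_trace ((w ^ 3 - w) / t) = abs_trace (a * w)" if "w ^ 3 ^ m = w" for w
    unfolding a_def r(2)[symmetric] using r(1) \<open>r \<noteq> 0\<close> that by (rule abs_trace_div_cube)
  define Bad where "Bad = {w::'a. abs_trace (a * w) = 0} \<union> {0, 1, -1}"
  have "card {0, 1, -1::'a} \<le> 3"
    using card_length[of "[0, 1, -1::'a]"] by (simp add: numeral_3_eq_3)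
  hence "card Bad \<le> 3 ^ (m - 1) + 3"
    unfolding Bad_def using card_abs_trace_eq_0_le[OF \<open>a \<noteq> 0\<close>] card_Un_le[of _ "{0, 1, -1::'a}"]
    by (meson add_le_mono le_trans)
  also have "\<dots> < 3 ^ m"
  proof -
    obtain k where "m = Suc k"
      using m_ge_1 by (cases m) auto
    thus ?thesis
      using assms(1) by simp
  qed
  also have "\<dots> = card {w::'a. w ^ 3 ^ m = w}"
    by (simp add: card_fixed_field)
  finally obtain w where w: "w ^ 3 ^ m = w" and "w \<notin> Bad"
    by (metis (mono_tags, lifting) card_mono finite mem_Collect_eq not_le subsetI)
  show thesis
  proof (rule that[OF w])
    show "w ^ 3 \<noteq> w"
      using \<open>w \<notin> Bad\<close> unfolding Bad_def cube_eq_self_iff by blast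
    fix y :: 'a
    assume "y ^ 3 ^ m = y"
    show "y ^ 3 - y + (w ^ 3 - w) / t \<noteq> 0"
    proof
      assume "y ^ 3 - y + (w ^ 3 - w) / t = 0"
      hence "abs_trace ((w ^ 3 - w) / t) = 0"
        by (rule abs_trace_eq_0_if_artin_schreier_root[OF \<open>y ^ 3 ^ m = y\<close>])
      with \<open>w \<notin> Bad\<close> show False
        unfolding trace_eq[OF w] Bad_def by simp
    qed
  qed
qed

lemma card_artin_schreier_kernel_ge:
  assumes "t ^ 3 ^ m = t"
  shows "3 ^ m \<le> card {p \<in> {x::'a. x ^ 3 ^ m = x} \<times> {x. x ^ 3 ^ m = x}.
    (fst p ^ 3 - fst p) + t * (snd p ^ 3 - snd p) = 0}" (is "_ \<le> card {p \<in> ?S. ?L p = 0}")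
proof -
  have "card ?S \<le> card {p \<in> ?S. ?L p = 0} * card (?L ` ?S)"
  proof (rule card_le_card_kernel_mult_card_image)
    show "p - p' \<in> ?S" if "p \<in> ?S" and "p' \<in> ?S" for p p'
      using that by auto
    show "?L (p - p') = ?L p - ?L p'" for p p'
      by (simp add: char3_cube_diff[OF three_eq_0] algebra_simps)
  qed simp
  also have "card (?L ` ?S) \<le> 3 ^ m"
  proof -
    have "?L ` ?S \<subseteq> {x::'a. x ^ 3 ^ m = x}"
      using assms by (auto simp: Frob.c_power)
    thus ?thesis
      using card_fixed_field card_mono[of "{x::'a. x ^ 3 ^ m = x}"] by simp
  qed
  finally have "3 ^ m * 3 ^ m \<le> card {p \<in> ?S. ?L p = 0} * 3 ^ m"
    unfolding card_cartesian_product card_fixed_field by simp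
  thus ?thesis
    by simp
qed

lemma exists_split_parameter_w_with_root:
  assumes "(3::nat) ^ m \<ge> 27" and "t ^ 3 ^ m = t" and "t \<noteq> 0"
  obtains w y :: 'a where "w ^ 3 ^ m = w" and "w ^ 3 \<noteq> w"
    and "y ^ 3 ^ m = y" and "y ^ 3 - y + (w ^ 3 - w) / t = 0"
proof -
  define ker where "ker = {p \<in> {x::'a. x ^ 3 ^ m = x} \<times> {x. x ^ 3 ^ m = x}.
    (fst p ^ 3 - fst p) + t * (snd p ^ 3 - snd p) = 0}"
  define Bad where "Bad = {p \<in> ker. fst p ^ 3 = fst p}"
  have "Bad \<subseteq> {0, 1, -1} \<times> {0, 1, -1}"
  proof
    fix p assume "p \<in> Bad"
    hence "fst p ^ 3 = fst p" and "t * (snd p ^ 3 - snd p) = 0"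
      by (auto simp: Bad_def ker_def)
    hence "fst p ^ 3 = fst p" and "snd p ^ 3 = snd p"
      using assms(3) by auto
    hence "fst p \<in> {0, 1, -1}" and "snd p \<in> {0, 1, -1}"
      unfolding cube_eq_self_iff by simp_all
    thus "p \<in> {0, 1, -1} \<times> {0, 1, -1}"
      by (rule mem_Times_iff[THEN iffD2, OF conjI])
  qed
  hence "card Bad \<le> card ({0, 1, -1::'a} \<times> {0, 1, -1::'a})"
    by (intro card_mono) simp_all
  also have "\<dots> \<le> 3 * 3"
    unfolding card_cartesian_product
    using card_length[of "[0, 1, -1::'a]"] by (intro mult_le_mono) (simp_all add: numeral_3_eq_3)
  also have "\<dots> < card ker"
    using card_artin_schreier_kernel_ge[OF assms(2)] assms(1) unfolding ker_def by simp
  finally have "card Bad < card ker" .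
  moreover have "Bad \<subseteq> ker"
    by (auto simp: Bad_def)
  ultimately obtain p where "p \<in> ker" and "p \<notin> Bad"
    by (metis subsetI subset_antisym less_irrefl)
  hence "fst p ^ 3 ^ m = fst p" and "snd p ^ 3 ^ m = snd p" and "fst p ^ 3 \<noteq> fst p"
    and "(fst p ^ 3 - fst p) + t * (snd p ^ 3 - snd p) = 0"
    by (auto simp: ker_def Bad_def)
  moreover from this(4) have "snd p ^ 3 - snd p + (fst p ^ 3 - fst p) / t = 0"
    using assms(3) by (simp add: field_simps)
  ultimately show thesis
    by (intro that) simp_all
qed

lemma beta_at_split_parameter:
  fixes z w :: 'a
  assumes "z * z ^ 3 ^ m = -1" and "z ^ 3 ^ m \<noteq> z" and "w ^ 3 ^ m = w" and "w ^ 3 \<noteq> w"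
  obtains b :: 'a where "b \<noteq> 0" and "beta (\<lambda>x. x ^ (3 ^ m + 2)) 1 b
    = 2 + card {y. y ^ 3 ^ m = y \<and> y ^ 3 - y + (w ^ 3 - w) / (- (z + z ^ 3 ^ m)) = 0}"
proof -
  interpret split_family "\<lambda>x::'a. x ^ 3 ^ m" z w
    by (intro split_family.intro split_family_axioms.intro frobenius_conjugation) (use assms in simp_all)
  have "(- \<tau>) ^ 3 ^ m \<noteq> - \<tau>"
    using c_\<tau>_neq by simp
  hence "beta (\<lambda>x. x ^ (3 ^ m + 2)) 1 (- \<tau>) = card {u. Frob.F u = - (- \<tau>)}"
    unfolding beta_def power_add by (rule Frob.card_pairs_eq_card_F_fibre)
  also have "\<dots> = 2 + card {y. y ^ 3 ^ m = y \<and> y ^ 3 - y + \<phi> / \<theta> = 0}"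
    unfolding minus_minus by (rule card_F_fibre_\<tau>)
  finally have "beta (\<lambda>x. x ^ (3 ^ m + 2)) 1 (- \<tau>)
      = 2 + card {y. y ^ 3 ^ m = y \<and> y ^ 3 - y + \<phi> / \<theta> = 0}" .
  moreover have "- \<tau> \<noteq> 0"
    using c_\<tau>_neq by auto
  ultimately show thesis
    by (intro that) (simp_all add: \<phi>_def \<theta>_def)
qed

lemma nu_2_pos:
  assumes "(3::nat) ^ m \<ge> 9"
  shows "nu (\<lambda>x::'a. x ^ (3 ^ m + 2)) 2 > 0"
proof -
  obtain z :: 'a where z: "z * z ^ 3 ^ m = -1" "z ^ 3 ^ m \<noteq> z"
    and "(- (z + z ^ 3 ^ m)) ^ 3 \<noteq> - (z + z ^ 3 ^ m)"
    using exists_split_parameter_z[OF assms] .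
  moreover have "(- (z + z ^ 3 ^ m)) ^ 3 ^ m = - (z + z ^ 3 ^ m)"
    by (simp add: add.commute)
  ultimately obtain w where w: "w ^ 3 ^ m = w" "w ^ 3 \<noteq> w"
    and no_root: "\<And>y. y ^ 3 ^ m = y \<Longrightarrow> y ^ 3 - y + (w ^ 3 - w) / (- (z + z ^ 3 ^ m)) \<noteq> 0"
    using exists_split_parameter_w_without_root[OF assms] by metis
  obtain b :: 'a where "b \<noteq> 0" and "beta (\<lambda>x. x ^ (3 ^ m + 2)) 1 b
      = 2 + card {y. y ^ 3 ^ m = y \<and> y ^ 3 - y + (w ^ 3 - w) / (- (z + z ^ 3 ^ m)) = 0}"
    using beta_at_split_parameter[OF z w] .
  moreover have "{y. y ^ 3 ^ m = y \<and> y ^ 3 - y + (w ^ 3 - w) / (- (z + z ^ 3 ^ m)) = 0} = {}"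
    using no_root by blast
  ultimately have "beta (\<lambda>x. x ^ (3 ^ m + 2)) 1 b = 2"
    by (metis add_0_right card.empty)
  with \<open>b \<noteq> 0\<close> show ?thesis
    by (rule nu_pos)
qed

lemma nu_5_pos:
  assumes "(3::nat) ^ m \<ge> 27"
  shows "nu (\<lambda>x::'a. x ^ (3 ^ m + 2)) 5 > 0"
proof -
  obtain z :: 'a where z: "z * z ^ 3 ^ m = -1" "z ^ 3 ^ m \<noteq> z"
    and "(- (z + z ^ 3 ^ m)) ^ 3 \<noteq> - (z + z ^ 3 ^ m)"
    using exists_split_parameter_z assms by force
  hence "- (z + z ^ 3 ^ m) \<noteq> 0"
    by auto
  moreover have "(- (z + z ^ 3 ^ m)) ^ 3 ^ m = - (z + z ^ 3 ^ m)"
    by (simp add: add.commute)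
  ultimately obtain w y where w: "w ^ 3 ^ m = w" "w ^ 3 \<noteq> w"
    and y: "y ^ 3 ^ m = y" "y ^ 3 - y + (w ^ 3 - w) / (- (z + z ^ 3 ^ m)) = 0"
    using exists_split_parameter_w_with_root[OF assms] by metis
  obtain b :: 'a where "b \<noteq> 0" and "beta (\<lambda>x. x ^ (3 ^ m + 2)) 1 b
      = 2 + card {y. y ^ 3 ^ m = y \<and> y ^ 3 - y + (w ^ 3 - w) / (- (z + z ^ 3 ^ m)) = 0}"
    using beta_at_split_parameter[OF z w] .
  moreover have "card {y. y ^ 3 ^ m = y \<and> y ^ 3 - y + (w ^ 3 - w) / (- (z + z ^ 3 ^ m)) = 0} = 3"
    using Frob.card_fixed_artin_schreier_roots[OF y] .
  ultimately have "beta (\<lambda>x. x ^ (3 ^ m + 2)) 1 b = 5"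
    by linarith
  with \<open>b \<noteq> 0\<close> show ?thesis
    by (rule nu_pos)
qed

end

theorem proposition9:
  fixes m :: nat
    and f :: "'a::{field,finite} \<Rightarrow> 'a"
  assumes "m \<ge> 1"
    and "card (UNIV :: 'a set) = (3 ^ m) ^ 2"
    and "f = (\<lambda>x. x ^ (3 ^ m + 2))"
  shows "(3 ^ m \<ge> (9::nat) \<longrightarrow> nu f 2 > 0)
       \<and> (3 ^ m \<ge> (27::nat) \<longrightarrow> nu f 5 > 0)"
  using nu_2_pos[OF assms(1,2)] nu_5_pos[OF assms(1,2)] assms(3) by simp

end
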